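(* Let $W=(w_1,w_2,w_3)$ be a $(3,2)$-uframe such that $\mathop{\rm co}\{\pm w_1,\pm w_2,\pm w_3\}$ is a regular hexagon. Then $W$ is a local maximum of $F(S)=\vol\left(\mathop{\rm co}\{\pm v_1,\pm v_2,\pm v_3\}\right)$ over $S=(v_1,v_2,v_3)\in\Omega(3,2)$.
   Context: An $(n,k)$-uframe is an ordered $n$-tuple $(v_1,\dots,v_n)$ of vectors in $\mathbb{R}^k$ spanning $\mathbb{R}^k$ with $\sum_i v_iv_i^T=I_k$; $\Omega(n,k)$ is the set of all of them, with the topology of $\mathbb{R}^{k\times n}$. $\vol$ is area. *)

theory Defs
  imports "HOL-Analysis.Analysis"
begin

text \<open>An ordered n-tuple of vectors in R^k is an element of real^'k^'n;
  its topology is that of R^(k x n).\<close>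

definition outer :: "real^'k \<Rightarrow> real^'k^'k" where
  "outer v = (\<chi> i j. v$i * v$j)"

definition uframe :: "real^'k^'n \<Rightarrow> bool" where
  "uframe V \<longleftrightarrow> span (range (\<lambda>i. V$i)) = UNIV \<and> (\<Sum>i\<in>UNIV. outer (V$i)) = mat 1"

definition Omega :: "(real^'k^'n) set" where
  "Omega = {V. uframe V}"

definition sym_hull :: "real^'k^'n \<Rightarrow> (real^'k) set" where
  "sym_hull V = convex hull (range (\<lambda>i. V$i) \<union> range (\<lambda>i. - (V$i)))"

definition F_vol :: "real^2^'n \<Rightarrow> real" where
  "F_vol V = measure lborel (sym_hull V)"

definition regular_hexagon :: "(real^2) set \<Rightarrow> bool" where
  "regular_hexagon H \<longleftrightarrow> (\<exists>c r t. r > 0 \<and>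
     H = convex hull ((\<lambda>k::nat. c + r *\<^sub>R vector [cos (t + real k * pi / 3), sin (t + real k * pi / 3)]) ` {0..<6}))"

end

theory Submission
  imports Defs
begin

text \<open>Write d(i,j) = det(v_i, v_j). For a (3,2)-uframe, Lagrange's identity gives
  d(1,2)^2 + d(1,3)^2 + d(2,3)^2 = det(V^T V) = 1. As long as the |d(i,j)| satisfy the
  triangle inequalities, the six points v_i, -v_i are the vertices of a convex hexagon that
  splits into six triangles with apex 0, so its area is |d(1,2)| + |d(1,3)| + |d(2,3)|, which is
  at most sqrt 3 by Cauchy-Schwarz. For a regular hexagon all |d(i,j)| are equal, hence equal to
  1/sqrt 3, and the area is exactly sqrt 3; there the triangle inequalities are strict, so they
  persist near W.\<close>

definition det2 :: "real^2 \<Rightarrow> real^2 \<Rightarrow> real" where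
  "det2 u w = u$1 * w$2 - u$2 * w$1"

lemma det2_simps [simp]:
  "det2 u u = 0" "det2 0 u = 0" "det2 u 0 = 0"
  "det2 (- u) w = - det2 u w" "det2 u (- w) = - det2 u w"
  "det2 (u + v) w = det2 u w + det2 v w" "det2 (u - v) w = det2 u w - det2 v w"
  "det2 w (u + v) = det2 w u + det2 w v" "det2 w (u - v) = det2 w u - det2 w v"
  "det2 (s *\<^sub>R u) w = s * det2 u w" "det2 u (s *\<^sub>R w) = s * det2 u w"
  by (auto simp: det2_def algebra_simps)

lemma det2_swap: "det2 w u = - det2 u w"
  by (simp add: det2_def)

lemma det2_eq_inner: "det2 u x = (\<chi> i. if i = 1 then - u$2 else u$1) \<bullet> x"
  by (simp add: det2_def inner_vec_def sum_2 algebra_simps)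

lemma det2_ge_convex_hull:
  assumes "x \<in> convex hull P" and "\<And>y. y \<in> P \<Longrightarrow> k \<le> det2 u y"
  shows "k \<le> det2 u x"
proof -
  have "convex hull P \<subseteq> {y. k \<le> det2 u y}"
    using assms(2) by (intro hull_minimal) (auto simp: det2_eq_inner convex_halfspace_ge)
  then show ?thesis
    using assms(1) by blast
qed

lemma det2_le_convex_hull:
  assumes "x \<in> convex hull P" and "\<And>y. y \<in> P \<Longrightarrow> det2 u y \<le> k"
  shows "det2 u x \<le> k"
  using det2_ge_convex_hull[OF assms(1), of "- k" "- u"] assms(2) by force

lemma negligible_det2_eq_0:
  assumes "u \<noteq> 0"
  shows "negligible {x. det2 u x = 0}"
proof -
  have "(\<chi> i. if i = 1 then - u$2 else u$1) \<noteq> (0 :: real^2)"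
    using assms by (auto simp: vec_eq_iff forall_2)
  then show ?thesis
    unfolding det2_eq_inner by (intro negligible_hyperplane) simp
qed

lemma mem_triangle_if_det2:
  assumes "0 < det2 u w" "0 \<le> det2 u x" "det2 w x \<le> 0" "0 \<le> det2 (w - u) (x - u)"
  shows "x \<in> convex hull {0, u, w}"
proof -
  define s where "s = det2 x w / det2 u w"
  define t where "t = det2 u x / det2 u w"
  have cramer: "det2 u w *\<^sub>R x = det2 x w *\<^sub>R u + det2 u x *\<^sub>R w"
    by (simp add: vec_eq_iff forall_2 det2_def algebra_simps)
  have "x = inverse (det2 u w) *\<^sub>R (det2 u w *\<^sub>R x)"
    using assms(1) by simp
  also have "\<dots> = s *\<^sub>R u + t *\<^sub>R w"
    unfolding cramer by (simp add: s_def t_def scaleR_add_right divide_inverse mult.commute)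
  finally have x: "x = s *\<^sub>R u + t *\<^sub>R w" .
  have "det2 (w - u) (x - u) = (1 - s - t) * det2 u w"
    using assms(1) by (simp add: x det2_swap[of w u] algebra_simps)
  then have "0 \<le> 1 - s - t"
    using assms(1,4) by (simp add: zero_le_mult_iff)
  moreover have "0 \<le> s" "0 \<le> t"
    using assms(1-3) by (simp_all add: s_def t_def det2_swap[of w x])
  ultimately show ?thesis
    unfolding convex_hull_3 using x
    by (intro CollectI exI[of _ "1 - s - t"] exI[of _ s] exI[of _ t]) auto
qed

lemma measure_triangle: "measure lebesgue (convex hull {0, u, w}) = \<bar>det2 u w\<bar> / 2"
proof -
  have "measure lebesgue (convex hull {0, u, w}) = measure lborel (convex hull {0, u, w})"
    by (intro measure_completion) (simp add: borel_compact finite_imp_compact_convex_hull)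
  then show ?thesis
    by (simp add: content_triangle det2_def abs_minus_commute mult.commute)
qed

lemma lmeasurable_triangle: "convex hull {0, u, w :: real^2} \<in> lmeasurable"
  by (intro lmeasurable_compact finite_imp_compact_convex_hull) auto

text \<open>The points p, q, r, -p, -q, -r are, in this counterclockwise order, the vertices of a
  convex hexagon.\<close>

definition hexagon_ccw :: "real^2 \<Rightarrow> real^2 \<Rightarrow> real^2 \<Rightarrow> bool" where
  "hexagon_ccw p q r \<longleftrightarrow> 0 < det2 p q \<and> 0 < det2 q r \<and> 0 < det2 p r \<and>
     det2 p r \<le> det2 p q + det2 q r \<and> det2 p q \<le> det2 p r + det2 q r \<and>
     det2 q r \<le> det2 p q + det2 p r"

lemma hexagon_ccw_uminus [simp]: "hexagon_ccw (- p) (- q) (- r) = hexagon_ccw p q r"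
  by (simp add: hexagon_ccw_def)

definition half_hexagon :: "real^2 \<Rightarrow> real^2 \<Rightarrow> real^2 \<Rightarrow> (real^2) set" where
  "half_hexagon p q r =
     convex hull {0, p, q} \<union> convex hull {0, q, r} \<union> convex hull {0, r, - p}"

lemma det2_nonneg_half_hexagon:
  assumes "0 < det2 p q" "0 < det2 p r" "x \<in> half_hexagon p q r"
  shows "0 \<le> det2 p x"
  using assms unfolding half_hexagon_def by (auto elim!: det2_ge_convex_hull)

lemma measure_half_hexagon:
  assumes pq: "0 < det2 p q" and qr: "0 < det2 q r" and pr: "0 < det2 p r"
  shows "measure lebesgue (half_hexagon p q r) = (det2 p q + det2 q r + det2 p r) / 2"
proof -
  have "r \<noteq> 0" "q \<noteq> 0"
    using qr by auto
  then have lines: "negligible {x. det2 q x = 0}" "negligible {x. det2 r x = 0}"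
    by (simp_all add: negligible_det2_eq_0)
  have "0 \<le> det2 q x" if "x \<in> convex hull {0, q, r}" for x
    using that qr by (auto elim!: det2_ge_convex_hull)
  moreover have "det2 q x \<le> 0" if "x \<in> convex hull {0, p, q}" for x
    using that pq by (auto elim!: det2_le_convex_hull simp: det2_swap[of q p])
  moreover have "det2 r x \<le> 0" if "x \<in> convex hull {0, p, q} \<union> convex hull {0, q, r}" for x
    using that qr pr by (auto elim!: det2_le_convex_hull simp: det2_swap[of r p] det2_swap[of r q])
  moreover have "0 \<le> det2 r x" if "x \<in> convex hull {0, r, - p}" for x
    using that pr by (auto elim!: det2_ge_convex_hull simp: det2_swap[of r p])
  ultimately have "negligible (convex hull {0, p, q} \<inter> convex hull {0, q, r})"
    "negligible (convex hull {0, p, q} \<inter> convex hull {0, r, - p})"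
    "negligible (convex hull {0, q, r} \<inter> convex hull {0, r, - p})"
    by (force intro: negligible_subset[OF lines(1)] negligible_subset[OF lines(2)])+
  then have "measure lebesgue (half_hexagon p q r) = measure lebesgue (convex hull {0, p, q})
      + measure lebesgue (convex hull {0, q, r}) + measure lebesgue (convex hull {0, r, - p})"
    unfolding half_hexagon_def by (intro measure_Un3_negligible lmeasurable_triangle) auto
  then show ?thesis
    using pq qr pr by (simp add: measure_triangle det2_swap[of r p])
qed

lemma sym_hexagon_subset_half_hexagon:
  assumes hex: "hexagon_ccw p q r"
    and x: "x \<in> convex hull {p, q, r, - p, - q, - r}" and px: "0 \<le> det2 p x"
  shows "x \<in> half_hexagon p q r"
proof -
  have pq: "0 < det2 p q" and qr: "0 < det2 q r" and pr: "0 < det2 p r"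
    using hex by (simp_all add: hexagon_ccw_def)
  have edge: "0 \<le> det2 (b - a) (x - a)"
    if "\<And>y. y \<in> {p, q, r, - p, - q, - r} \<Longrightarrow> 0 \<le> det2 (b - a) (y - a)" for a b
    using det2_ge_convex_hull[OF x, of "det2 (b - a) a" "b - a"] that
    by simp
  have sw: "det2 q p = - det2 p q" "det2 r q = - det2 q r" "det2 r p = - det2 p r"
    by (simp_all add: det2_def)
  have "0 \<le> det2 (q - p) (x - p)" "0 \<le> det2 (r - q) (x - q)" "0 \<le> det2 (- p - r) (x - r)"
    by (rule edge; use hex in \<open>auto simp: hexagon_ccw_def sw\<close>)+
  then consider "det2 q x \<le> 0" "0 \<le> det2 (q - p) (x - p)"
    | "0 \<le> det2 q x" "det2 r x \<le> 0" "0 \<le> det2 (r - q) (x - q)"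
    | "0 \<le> det2 r x" "0 \<le> det2 (- p - r) (x - r)"
    by linarith
  then have "x \<in> convex hull {0, p, q} \<or> x \<in> convex hull {0, q, r} \<or> x \<in> convex hull {0, r, - p}"
  proof cases
    case 1
    then show ?thesis using pq px by (blast intro: mem_triangle_if_det2)
  next
    case 2
    then show ?thesis using qr by (blast intro: mem_triangle_if_det2)
  next
    case 3
    moreover have "0 < det2 r (- p)" "det2 (- p) x \<le> 0"
      using pr px by (simp_all add: sw)
    ultimately show ?thesis by (blast intro: mem_triangle_if_det2)
  qed
  then show ?thesis
    by (auto simp: half_hexagon_def)
qed

lemma sym_hexagon_eq_Un_half_hexagons:
  assumes "hexagon_ccw p q r"
  shows "convex hull {p, q, r, - p, - q, - r} = half_hexagon p q r \<union> half_hexagon (- p) (- q) (- r)"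
    (is "?H = _")
proof
  show "?H \<subseteq> half_hexagon p q r \<union> half_hexagon (- p) (- q) (- r)"
  proof
    fix x
    assume x: "x \<in> ?H"
    show "x \<in> half_hexagon p q r \<union> half_hexagon (- p) (- q) (- r)"
    proof (cases "0 \<le> det2 p x")
      case True
      then show ?thesis
        using sym_hexagon_subset_half_hexagon[OF assms x] by blast
    next
      case False
      have "{p, q, r, - p, - q, - r} = {- p, - q, - r, - (- p), - (- q), - (- r)}"
        by auto
      then have "x \<in> half_hexagon (- p) (- q) (- r)"
        using False x assms by (intro sym_hexagon_subset_half_hexagon) auto
      then show ?thesis ..
    qed
  qed
next
  have "midpoint p (- p) \<in> ?H"
    by (intro midpoints_in_convex_hull hull_inc) auto
  then have "0 \<in> ?H"
    by (simp add: midpoint_def)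
  then have "convex hull {0, a, b} \<subseteq> ?H" if "a \<in> {p, q, r, - p, - q, - r}" "b \<in> {p, q, r, - p, - q, - r}" for a b
    using that by (intro convex_hull_subset) (auto intro: hull_inc)
  then show "half_hexagon p q r \<union> half_hexagon (- p) (- q) (- r) \<subseteq> ?H"
    unfolding half_hexagon_def by (simp add: Un_least)
qed

lemma measure_sym_hexagon:
  assumes "hexagon_ccw p q r"
  shows "measure lebesgue (convex hull {p, q, r, - p, - q, - r}) = det2 p q + det2 q r + det2 p r"
proof -
  have pq: "0 < det2 p q" and qr: "0 < det2 q r" and pr: "0 < det2 p r"
    using assms by (simp_all add: hexagon_ccw_def)
  have "half_hexagon p q r \<inter> half_hexagon (- p) (- q) (- r) \<subseteq> {x. det2 p x = 0}"
    using det2_nonneg_half_hexagon[OF pq pr] det2_nonneg_half_hexagon[of "- p" "- q" "- r"] pq pr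
    by fastforce
  moreover have "p \<noteq> 0"
    using pq by auto
  ultimately have "negligible (half_hexagon p q r \<inter> half_hexagon (- p) (- q) (- r))"
    using negligible_det2_eq_0 negligible_subset by blast
  moreover have "half_hexagon a b c \<in> lmeasurable" for a b c
    by (simp add: half_hexagon_def lmeasurable_triangle fmeasurable.Un)
  ultimately show ?thesis
    unfolding sym_hexagon_eq_Un_half_hexagons[OF assms]
    using pq qr pr by (simp add: measure_Un3 negligible_imp_measure0 measure_half_hexagon)
qed

lemma measure_sym_hexagon_abs:
  fixes u v w :: "real^2"
  assumes "0 < \<bar>det2 u v\<bar>" "0 < \<bar>det2 u w\<bar>" "0 < \<bar>det2 v w\<bar>"
    and "\<bar>det2 u v\<bar> \<le> \<bar>det2 u w\<bar> + \<bar>det2 v w\<bar>"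
    and "\<bar>det2 u w\<bar> \<le> \<bar>det2 u v\<bar> + \<bar>det2 v w\<bar>"
    and "\<bar>det2 v w\<bar> \<le> \<bar>det2 u v\<bar> + \<bar>det2 u w\<bar>"
  shows "measure lebesgue (convex hull {u, v, w, - u, - v, - w})
    = \<bar>det2 u v\<bar> + \<bar>det2 u w\<bar> + \<bar>det2 v w\<bar>"
proof -
  txt \<open>Reflecting v and w through 0 where necessary does not change the hexagon and makes
    det2 u v and det2 u w positive; the sign of det2 v w then fixes the counterclockwise order.\<close>
  define flip where "flip x = (if 0 < det2 u x then x else - x)" for x
  have flip_det2: "det2 u (flip x) = \<bar>det2 u x\<bar>" if "det2 u x \<noteq> 0" for x
    using that by (auto simp: flip_def)
  have flip_abs: "\<bar>det2 (flip x) (flip y)\<bar> = \<bar>det2 x y\<bar>" for x y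
    by (simp add: flip_def)
  have flip_hull: "{u, flip x, flip y, - u, - flip x, - flip y} = {u, x, y, - u, - x, - y}" for x y
    by (auto simp: flip_def)
  have ccw_case: "measure lebesgue (convex hull {u, x, y, - u, - x, - y})
      = \<bar>det2 u x\<bar> + \<bar>det2 u y\<bar> + \<bar>det2 x y\<bar>"
    if "0 < \<bar>det2 u x\<bar>" "0 < \<bar>det2 u y\<bar>" "0 < det2 (flip x) (flip y)"
      "\<bar>det2 u x\<bar> \<le> \<bar>det2 u y\<bar> + \<bar>det2 x y\<bar>"
      "\<bar>det2 u y\<bar> \<le> \<bar>det2 u x\<bar> + \<bar>det2 x y\<bar>"
      "\<bar>det2 x y\<bar> \<le> \<bar>det2 u x\<bar> + \<bar>det2 u y\<bar>"
    for x y
  proof -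
    have "det2 (flip x) (flip y) = \<bar>det2 x y\<bar>"
      using that(3) flip_abs[of x y] by linarith
    then have "hexagon_ccw u (flip x) (flip y)"
      using that by (simp add: hexagon_ccw_def flip_det2)
    from measure_sym_hexagon[OF this] show ?thesis
      using \<open>det2 (flip x) (flip y) = \<bar>det2 x y\<bar>\<close> that
      by (simp add: flip_hull flip_det2 add.commute add.left_commute)
  qed
  have "det2 (flip v) (flip w) \<noteq> 0"
    using flip_abs[of v w] assms(3) by auto
  then consider "0 < det2 (flip v) (flip w)" | "0 < det2 (flip w) (flip v)"
    by (metis det2_swap linorder_neqE_linordered_idom neg_0_less_iff_less)
  then show ?thesis
  proof cases
    case 1
    then show ?thesis using ccw_case assms by blast
  next
    case 2
    have "{u, v, w, - u, - v, - w} = {u, w, v, - u, - w, - v}"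
      by auto
    then show ?thesis
      using ccw_case[of w v] 2 assms by (simp add: det2_swap[of w v])
  qed
qed

lemma sym_hull_3: "sym_hull (V :: real^'k^3) = convex hull {V$1, V$2, V$3, - V$1, - V$2, - V$3}"
  unfolding sym_hull_def by (rule arg_cong[where f = "\<lambda>S. convex hull S"]) (auto simp: UNIV_3)

lemma F_vol_eq_sum_abs_det2:
  fixes V :: "real^2^3"
  defines "d i j \<equiv> \<bar>det2 (V$i) (V$j)\<bar>"
  assumes "0 < d 1 2" "0 < d 1 3" "0 < d 2 3"
    and "d 1 2 \<le> d 1 3 + d 2 3" "d 1 3 \<le> d 1 2 + d 2 3" "d 2 3 \<le> d 1 2 + d 1 3"
  shows "F_vol V = d 1 2 + d 1 3 + d 2 3"
proof -
  have "F_vol V = measure lebesgue (sym_hull V)"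
    unfolding F_vol_def sym_hull_3
    by (intro measure_completion[symmetric]) (simp add: borel_compact finite_imp_compact_convex_hull)
  then show ?thesis
    using assms unfolding sym_hull_3 by (simp add: measure_sym_hexagon_abs)
qed

lemma Omega_column_inner:
  fixes S :: "real^'k^'n"
  assumes "S \<in> Omega"
  shows "(\<Sum>i\<in>UNIV. S$i$k * S$i$l) = (if k = l then 1 else 0)"
proof -
  have "(\<Sum>i\<in>UNIV. outer (S$i)) $ k $ l = mat 1 $ k $ l"
    using assms by (simp add: Omega_def uframe_def)
  then show ?thesis
    by (simp add: sum_component outer_def mat_def)
qed

lemma Omega_abs_entry_le_1:
  fixes S :: "real^'k^'n"
  assumes "S \<in> Omega"
  shows "\<bar>S$i$k\<bar> \<le> 1"
proof -
  have "(S$i$k)^2 \<le> (\<Sum>j\<in>UNIV. S$j$k * S$j$k)"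
    unfolding power2_eq_square by (rule member_le_sum) simp_all
  then show ?thesis
    using Omega_column_inner[OF assms, of k k] by (simp add: abs_square_le_1)
qed

lemma Omega_sum_det2_squares:
  fixes S :: "real^2^3"
  assumes "S \<in> Omega"
  shows "(det2 (S$1) (S$2))^2 + (det2 (S$1) (S$3))^2 + (det2 (S$2) (S$3))^2 = 1"
proof -
  have "(\<Sum>i\<in>UNIV. S$i$k * S$i$l) = (if k = l then 1 else 0)" for k l
    using Omega_column_inner[OF assms] .
  then have col: "(S$1$1)^2 + (S$2$1)^2 + (S$3$1)^2 = 1" "(S$1$2)^2 + (S$2$2)^2 + (S$3$2)^2 = 1"
      "S$1$1 * S$1$2 + S$2$1 * S$2$2 + S$3$1 * S$3$2 = 0"
    by (simp_all add: sum_3 power2_eq_square)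
  have "(det2 (S$1) (S$2))^2 + (det2 (S$1) (S$3))^2 + (det2 (S$2) (S$3))^2
      = ((S$1$1)^2 + (S$2$1)^2 + (S$3$1)^2) * ((S$1$2)^2 + (S$2$2)^2 + (S$3$2)^2)
        - (S$1$1 * S$1$2 + S$2$1 * S$2$2 + S$3$1 * S$3$2)^2"
    unfolding det2_def by (simp add: power2_eq_square algebra_simps)
  then show ?thesis
    by (simp add: col)
qed

lemma abs_det2_le:
  assumes "\<And>k. \<bar>a$k\<bar> \<le> A" and "\<And>k. \<bar>b$k\<bar> \<le> B"
  shows "\<bar>det2 a b\<bar> \<le> 2 * A * B"
proof -
  have ab: "\<bar>a$k * b$l\<bar> \<le> A * B" for k l
    unfolding abs_mult using assms by (intro mult_mono) (auto intro: order_trans[OF abs_ge_zero])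
  have "\<bar>det2 a b\<bar> \<le> \<bar>a$1 * b$2\<bar> + \<bar>a$2 * b$1\<bar>"
    unfolding det2_def by (rule abs_triangle_ineq4)
  also have "\<dots> \<le> 2 * A * B"
    using ab[of 1 2] ab[of 2 1] by simp
  finally show ?thesis .
qed

lemma Omega_abs_det2_diff_le:
  fixes S W :: "real^2^'n"
  assumes "S \<in> Omega" "W \<in> Omega"
  shows "\<bar>det2 (S$i) (S$j) - det2 (W$i) (W$j)\<bar> \<le> 4 * dist S W"
proof -
  have close: "\<bar>S$i$k - W$i$k\<bar> \<le> dist S W" for i k
  proof -
    have "\<bar>(S - W)$i$k\<bar> \<le> norm ((S - W)$i)"
      by (rule component_le_norm_cart)
    also have "\<dots> \<le> norm (S - W)"
      by (rule Finite_Cartesian_Product.norm_nth_le)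
    finally show ?thesis
      by (simp add: dist_norm)
  qed
  have "det2 (S$i) (S$j) - det2 (W$i) (W$j) = det2 (S$i) (S$j - W$j) + det2 (S$i - W$i) (W$j)"
    by simp
  also have "\<bar>\<dots>\<bar> \<le> 2 * 1 * dist S W + 2 * dist S W * 1"
    using Omega_abs_entry_le_1[OF assms(1)] Omega_abs_entry_le_1[OF assms(2)] close
    by (intro abs_triangle_ineq[THEN order_trans] add_mono abs_det2_le) auto
  finally show ?thesis
    by simp
qed

lemma abs_sum3_le_sqrt3:
  fixes a b c :: real
  assumes "a^2 + b^2 + c^2 = 1"
  shows "\<bar>a\<bar> + \<bar>b\<bar> + \<bar>c\<bar> \<le> sqrt 3"
proof (rule real_le_rsqrt)
  have "(\<bar>a\<bar> + \<bar>b\<bar> + \<bar>c\<bar>)^2 + ((\<bar>a\<bar> - \<bar>b\<bar>)^2 + (\<bar>a\<bar> - \<bar>c\<bar>)^2 + (\<bar>b\<bar> - \<bar>c\<bar>)^2)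
      = 3 * (a^2 + b^2 + c^2)"
    by (simp add: power2_eq_square algebra_simps)
  then show "(\<bar>a\<bar> + \<bar>b\<bar> + \<bar>c\<bar>)^2 \<le> 3"
    using assms by (smt (verit) zero_le_power2)
qed

definition hexagon_vertex :: "real^2 \<Rightarrow> real \<Rightarrow> real \<Rightarrow> nat \<Rightarrow> real^2" where
  "hexagon_vertex c r t k =
     c + r *\<^sub>R vector [cos (t + real k * pi / 3), sin (t + real k * pi / 3)]"

lemma regular_hexagon_iff:
  "regular_hexagon H \<longleftrightarrow> (\<exists>c r t. 0 < r \<and> H = convex hull (hexagon_vertex c r t ` {0..<6}))"
  by (simp add: regular_hexagon_def hexagon_vertex_def)

lemma dist_hexagon_vertex: "dist c (hexagon_vertex c r t k) = \<bar>r\<bar>"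
proof -
  have "norm (vector [cos x, sin x] :: real^2) = 1" for x
    by (simp add: norm_eq_1 inner_vec_def sum_2 flip: power2_eq_square)
  then show ?thesis
    by (simp add: hexagon_vertex_def dist_norm)
qed

lemma hexagon_vertex_add3: "hexagon_vertex c r t (k + 3) = 2 *\<^sub>R c - hexagon_vertex c r t k"
proof -
  have shift: "t + real (k + 3) * pi / 3 = (t + real k * pi / 3) + pi"
    by (simp add: field_simps)
  show ?thesis
    unfolding hexagon_vertex_def shift by (simp add: vec_eq_iff forall_2)
qed

lemma det2_hexagon_vertex:
  "det2 (hexagon_vertex 0 r t a) (hexagon_vertex 0 r t b) = r^2 * sin ((real b - real a) * pi / 3)"
proof -
  have angle: "sin ((real b - real a) * pi / 3) = sin ((t + real b * pi / 3) - (t + real a * pi / 3))"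
    by (rule arg_cong[where f = sin]) (simp add: field_simps)
  show ?thesis
    unfolding hexagon_vertex_def angle sin_diff
    by (simp add: det2_def power2_eq_square algebra_simps)
qed

lemma abs_det2_hexagon_vertex:
  assumes "a < 3" "b < 3" "a \<noteq> b"
  shows "\<bar>det2 (hexagon_vertex 0 r t a) (hexagon_vertex 0 r t b)\<bar> = r^2 * sqrt 3 / 2"
proof -
  have sin_120: "sin (2 * pi / 3) = sqrt 3 / 2"
    using sin_120' by (simp add: mult.commute)
  have "a \<in> {0, 1, 2}" "b \<in> {0, 1, 2}"
    using assms by auto
  then have "real b - real a \<in> {-2, -1, 1, 2}"
    using assms by auto
  then have "\<bar>sin ((real b - real a) * pi / 3)\<bar> = sqrt 3 / 2"
    by (auto simp: sin_60 sin_120)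
  then show ?thesis
    by (simp add: det2_hexagon_vertex abs_mult)
qed

lemma mem_if_mem_sphere_convex_hull:
  fixes X :: "'a::real_inner set"
  assumes "X \<subseteq> cball c r" and "y \<in> sphere c r" and "y \<in> convex hull X"
  shows "y \<in> X"
proof (rule ccontr)
  assume "y \<notin> X"
  have "(y - c) \<bullet> x < r^2 + (y - c) \<bullet> c" if "x \<in> X" for x
  proof -
    have "0 < norm (x - y)^2"
      using that \<open>y \<notin> X\<close> by auto
    also have "norm (x - y)^2 = norm (x - c)^2 - 2 * ((y - c) \<bullet> (x - c)) + norm (y - c)^2"
      by (simp add: power2_norm_eq_inner inner_diff_left inner_diff_right inner_commute algebra_simps)
    moreover have "norm (x - c) \<le> r"
      using assms(1) that by (auto simp: dist_norm norm_minus_commute)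
    then have "norm (x - c)^2 \<le> r^2"
      by (simp add: power_mono)
    moreover have "norm (y - c)^2 = r^2"
      using assms(2) by (simp add: dist_norm norm_minus_commute)
    ultimately have "(y - c) \<bullet> (x - c) < r^2"
      by linarith
    then show ?thesis
      by (simp add: inner_diff_right)
  qed
  then have "convex hull X \<subseteq> {x. (y - c) \<bullet> x < r^2 + (y - c) \<bullet> c}"
    by (intro hull_minimal) (auto simp: convex_halfspace_lt)
  then have "(y - c) \<bullet> (y - c) < r^2"
    using assms(3) by (auto simp: inner_diff_right)
  then show False
    using assms(2) by (simp add: inner_diff_right dist_norm norm_minus_commute flip: power2_norm_eq_inner)
qed

lemma subset_cball_hexagon:
  assumes "convex hull X = convex hull (hexagon_vertex c r t ` {0..<6})"
  shows "X \<subseteq> cball c \<bar>r\<bar>"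
proof -
  have "convex hull (hexagon_vertex c r t ` {0..<6}) \<subseteq> cball c \<bar>r\<bar>"
    by (intro hull_minimal) (auto simp: dist_hexagon_vertex)
  then show ?thesis
    using hull_subset[of X convex] assms by auto
qed

lemma hexagon_vertex_mem:
  assumes "convex hull X = convex hull (hexagon_vertex c r t ` {0..<6})" and "k < 6"
  shows "hexagon_vertex c r t k \<in> X"
proof (rule mem_if_mem_sphere_convex_hull)
  show "X \<subseteq> cball c \<bar>r\<bar>"
    using assms(1) by (rule subset_cball_hexagon)
  show "hexagon_vertex c r t k \<in> sphere c \<bar>r\<bar>"
    by (simp add: dist_hexagon_vertex)
  show "hexagon_vertex c r t k \<in> convex hull X"
    unfolding assms(1) using assms(2) by (intro hull_inc) auto
qed

lemma hexagon_centre_eq_0: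
  assumes hull: "convex hull X = convex hull (hexagon_vertex c r t ` {0..<6})"
    and sym: "\<And>x. x \<in> X \<Longrightarrow> - x \<in> X"
  shows "c = 0"
proof -
  txt \<open>The reflections of the antipodal vertices 0 and 3 also lie in the circumscribed ball;
    by the parallelogram law this forces c = 0.\<close>
  define a where "a = hexagon_vertex c r t 0 - c"
  have "- hexagon_vertex c r t k \<in> cball c \<bar>r\<bar>" if "k < 6" for k
    using sym hexagon_vertex_mem[OF hull that] subset_cball_hexagon[OF hull] by blast
  then have "norm (c + hexagon_vertex c r t 0) \<le> \<bar>r\<bar>" "norm (c + hexagon_vertex c r t 3) \<le> \<bar>r\<bar>"
    by (simp_all add: dist_norm)
  moreover have "c + hexagon_vertex c r t 0 = 2 *\<^sub>R c + a" "c + hexagon_vertex c r t 3 = 2 *\<^sub>R c - a"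
    using hexagon_vertex_add3[of c r t 0] by (simp_all add: a_def scaleR_2 algebra_simps)
  ultimately have "norm (2 *\<^sub>R c + a) \<le> \<bar>r\<bar>" "norm (2 *\<^sub>R c - a) \<le> \<bar>r\<bar>"
    by simp_all
  then have "norm (2 *\<^sub>R c + a)^2 \<le> r^2" "norm (2 *\<^sub>R c - a)^2 \<le> r^2"
    by (metis norm_ge_zero power2_abs power_mono)+
  moreover have "norm (u + v)^2 + norm (u - v)^2 = 2 * norm u ^ 2 + 2 * norm v ^ 2" for u v :: "real^2"
    by (simp add: power2_norm_eq_inner inner_add_left inner_add_right inner_diff_left
        inner_diff_right inner_commute)
  moreover have "norm a ^ 2 = r^2"
    using dist_hexagon_vertex[of c r t 0] by (simp add: a_def dist_norm norm_minus_commute)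
  ultimately have "norm (2 *\<^sub>R c) ^ 2 \<le> 0"
    by (smt (verit))
  then show ?thesis
    by simp
qed

lemma regular_hexagon_sym_hull_abs_det2:
  fixes V :: "real^2^3"
  assumes "regular_hexagon (sym_hull V)"
  obtains K where "0 < K" and "\<And>i j. i \<noteq> j \<Longrightarrow> \<bar>det2 (V$i) (V$j)\<bar> = K"
proof -
  define X where "X = range (\<lambda>i. V$i) \<union> range (\<lambda>i. - V$i)"
  obtain c r t where "0 < r" and hull: "convex hull X = convex hull (hexagon_vertex c r t ` {0..<6})"
    using assms unfolding regular_hexagon_iff sym_hull_def X_def by blast
  have "c = 0"
    using hull by (rule hexagon_centre_eq_0) (auto simp: X_def)
  define Q where "Q = hexagon_vertex 0 r t"
  have "Q a \<in> X" if "a < 3" for a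
    using hexagon_vertex_mem[OF hull, of a] that \<open>c = 0\<close> by (simp add: Q_def)
  then have "\<forall>a. \<exists>i. a < 3 \<longrightarrow> V$i = Q a \<or> V$i = - Q a"
    unfolding X_def by (metis (no_types, lifting) UnE imageE minus_minus)
  then obtain idx where idx: "\<And>a. a < 3 \<Longrightarrow> V$(idx a) = Q a \<or> V$(idx a) = - Q a"
    by (metis choice)
  have det_idx: "\<bar>det2 (V$(idx a)) (V$(idx b))\<bar> = r^2 * sqrt 3 / 2"
    if "a < 3" "b < 3" "a \<noteq> b" for a b
    using idx[OF that(1)] idx[OF that(2)] abs_det2_hexagon_vertex[OF that, of r t]
    by (auto simp: Q_def)
  have "inj_on idx {0..<3}"
  proof (rule inj_onI)
    fix a b
    assume "a \<in> {0..<3}" "b \<in> {0..<3}" "idx a = idx b"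
    show "a = b"
    proof (rule ccontr)
      assume "a \<noteq> b"
      then have "\<bar>det2 (V$(idx a)) (V$(idx b))\<bar> = r^2 * sqrt 3 / 2"
        using \<open>a \<in> {0..<3}\<close> \<open>b \<in> {0..<3}\<close> by (simp add: det_idx)
      then show False
        using \<open>idx a = idx b\<close> \<open>0 < r\<close> by simp
    qed
  qed
  then have onto: "idx ` {0..<3} = UNIV"
    by (intro card_eq_UNIV_imp_eq_UNIV) (simp_all add: card_image)
  show ?thesis
  proof (rule that)
    show "0 < r^2 * sqrt 3 / 2"
      using \<open>0 < r\<close> by simp
    fix i j :: 3
    assume "i \<noteq> j"
    have "i \<in> idx ` {0..<3}" "j \<in> idx ` {0..<3}"
      by (simp_all add: onto)
    then obtain a b where "a < 3" "b < 3" "i = idx a" "j = idx b"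
      by auto
    then show "\<bar>det2 (V$i) (V$j)\<bar> = r^2 * sqrt 3 / 2"
      using det_idx \<open>i \<noteq> j\<close> by blast
  qed
qed

lemma Omega_regular_hexagon_abs_det2:
  fixes W :: "real^2^3"
  assumes "W \<in> Omega" and "regular_hexagon (sym_hull W)" and "i \<noteq> j"
  shows "\<bar>det2 (W$i) (W$j)\<bar> = sqrt 3 / 3"
proof -
  obtain K where "0 < K" and KW: "\<And>i j. i \<noteq> j \<Longrightarrow> \<bar>det2 (W$i) (W$j)\<bar> = K"
    using regular_hexagon_sym_hull_abs_det2[OF assms(2)] by blast
  have "(det2 (W$i) (W$j))^2 = K^2" if "i \<noteq> j" for i j
    using KW[OF that] by (metis power2_abs)
  then have "(3 * K)^2 = 3"
    using Omega_sum_det2_squares[OF assms(1)] by (simp add: power_mult_distrib)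
  then have "3 * K = sqrt 3"
    using \<open>0 < K\<close> by (intro real_sqrt_unique[symmetric]) simp_all
  then show ?thesis
    using KW[OF assms(3)] by simp
qed

lemma Omega_F_vol_le_sqrt3:
  fixes S :: "real^2^3"
  assumes "S \<in> Omega" and "\<And>i j. i \<noteq> j \<Longrightarrow> \<bar>\<bar>det2 (S$i) (S$j)\<bar> - sqrt 3 / 3\<bar> \<le> 1/10"
  shows "F_vol S \<le> sqrt 3"
proof -
  txt \<open>Since sqrt 3 / 3 \<ge> 3/10, the margin 1/10 keeps the triangle inequalities.\<close>
  have "9/10 \<le> sqrt 3"
    by (rule real_le_rsqrt) (simp add: power2_eq_square)
  moreover have "\<bar>\<bar>det2 (S$1) (S$2)\<bar> - sqrt 3 / 3\<bar> \<le> 1/10"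
    "\<bar>\<bar>det2 (S$1) (S$3)\<bar> - sqrt 3 / 3\<bar> \<le> 1/10" "\<bar>\<bar>det2 (S$2) (S$3)\<bar> - sqrt 3 / 3\<bar> \<le> 1/10"
    by (rule assms(2); simp)+
  ultimately have "F_vol S = \<bar>det2 (S$1) (S$2)\<bar> + \<bar>det2 (S$1) (S$3)\<bar> + \<bar>det2 (S$2) (S$3)\<bar>"
    unfolding abs_le_iff by (intro F_vol_eq_sum_abs_det2) linarith+
  also have "\<dots> \<le> sqrt 3"
    using Omega_sum_det2_squares[OF assms(1)] by (rule abs_sum3_le_sqrt3)
  finally show ?thesis .
qed

theorem lemma12:
  fixes W :: "real^2^3"
  assumes "W \<in> Omega"
    and "regular_hexagon (sym_hull W)"
  shows "\<exists>e>0. \<forall>S\<in>Omega. dist S W < e \<longrightarrow> F_vol S \<le> F_vol W"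
proof -
  have W: "\<bar>det2 (W$i) (W$j)\<bar> = sqrt 3 / 3" if "i \<noteq> j" for i j
    using Omega_regular_hexagon_abs_det2[OF assms that] .
  have "F_vol W = sqrt 3"
    by (subst F_vol_eq_sum_abs_det2) (simp_all add: W)
  moreover have "F_vol S \<le> sqrt 3" if "S \<in> Omega" and "dist S W < 1/40" for S
  proof (rule Omega_F_vol_le_sqrt3[OF \<open>S \<in> Omega\<close>])
    fix i j :: 3
    assume "i \<noteq> j"
    then show "\<bar>\<bar>det2 (S$i) (S$j)\<bar> - sqrt 3 / 3\<bar> \<le> 1/10"
      using Omega_abs_det2_diff_le[OF \<open>S \<in> Omega\<close> assms(1), of i j] W[OF \<open>i \<noteq> j\<close>]
        abs_triangle_ineq3[of "det2 (S$i) (S$j)" "det2 (W$i) (W$j)"] \<open>dist S W < 1/40\<close>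
      by linarith
  qed
  ultimately show ?thesis
    by (intro exI[of _ "1/40"]) auto
qed

end
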